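(* For every indecomposable instrument $\mathcal{I}\in\mathrm{Ins}(\Omega,\mathcal{H},\mathcal{K})$ there exists a dilation $(\mathcal{H}_A,W,\mathsf{E})$ of $\mathcal{I}$ such that the complementary instrument $\mathcal{I}^C\in\mathrm{Ins}(\Omega,\mathcal{H},\mathcal{H}_A)$ relative to it is the measure-and-prepare instrument $\mathcal{I}^C_x(\varrho)=\mathrm{tr}[\mathsf{A}^{\mathcal{I}}(x)\varrho]\,|\varphi_x\rangle\langle\varphi_x|$ for all $x\in\Omega$ and states $\varrho$, for some orthonormal basis $\{\varphi_x\}_{x\in\Omega}$ of $\mathcal{H}_A$.
   Context: All Hilbert spaces are finite-dimensional and complex, and all outcome sets are finite. A POVM $\mathsf{E}\in\mathcal{O}(\Omega,\mathcal{H})$ is a map $x\mapsto\mathsf{E}(x)$ to positive operators with $\sum_x\mathsf{E}(x)=I$. An instrument $\mathcal{I}\in\mathrm{Ins}(\Omega,\mathcal{H},\mathcal{K})$ is a family $(\mathcal{I}_x)_{x\in\Omega}$ of completely positive trace-nonincreasing linear maps $\mathcal{L}(\mathcal{H})\to\mathcal{L}(\mathcal{K})$ whose sum is trace preserving; its induced POVM is given by $\mathrm{tr}[\mathsf{A}^{\mathcal{I}}(x)\varrho]=\mathrm{tr}[\mathcal{I}_x(\varrho)]$. $\mathcal{I}$ is indecomposable if each nonzero $\mathcal{I}_x$ has Kraus rank 1, i.e. $\mathcal{I}_x(\varrho)=K_x\varrho K_x^*$ for an operator $K_x:\mathcal{H}\to\mathcal{K}$. A dilation of $\mathcal{I}$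 is a triple $(\mathcal{H}_A,W,\mathsf{E})$ with $W:\mathcal{H}\to\mathcal{H}_A\otimes\mathcal{K}$ an isometry and $\mathsf{E}\in\mathcal{O}(\Omega,\mathcal{H}_A)$ such that $\mathcal{I}_x(\varrho)=\mathrm{tr}_{\mathcal{H}_A}[W\varrho W^*(\mathsf{E}(x)\otimes I_{\mathcal{K}})]$; the complementary instrument relative to it is $\mathcal{I}^C_x(\varrho)=\mathrm{tr}_{\mathcal{K}}[(\sqrt{\mathsf{E}(x)}\otimes I_{\mathcal{K}})W\varrho W^*(\sqrt{\mathsf{E}(x)}\otimes I_{\mathcal{K}})]$. An instrument is measure-and-prepare if it has the form $\varrho\mapsto\mathrm{tr}[\mathsf{A}(x)\varrho]\xi_x$ for a POVM $\mathsf{A}$ and states $\xi_x$. *)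

theory Defs
  imports Complex_Main "Jordan_Normal_Form.Matrix"
begin

text \<open>Finite-dimensional complex Hilbert spaces are modelled as C^n; operators
  H -> K (H = C^n, K = C^m) are complex matrices in carrier_mat m n.
  Tensor products C^a (x) C^m are C^(a*m) with basis index (i,p) |-> i*m+p.\<close>

definition adj :: "complex mat \<Rightarrow> complex mat" where
  "adj A = mat (dim_col A) (dim_row A) (\<lambda>(i,j). cnj (A $$ (j,i)))"

definition ctrace :: "complex mat \<Rightarrow> complex" where
  "ctrace A = (\<Sum>i<dim_row A. A $$ (i,i))"

definition psd :: "nat \<Rightarrow> complex mat \<Rightarrow> bool" where
  "psd n A \<longleftrightarrow> A \<in> carrier_mat n n \<and>
     (\<forall>v \<in> carrier_vec n. let q = (\<Sum>i<n. \<Sum>j<n. cnj (v $ i) * A $$ (i,j) * v $ j)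
                           in Im q = 0 \<and> Re q \<ge> 0)"

definition density :: "nat \<Rightarrow> complex mat \<Rightarrow> bool" where
  "density n \<rho> \<longleftrightarrow> psd n \<rho> \<and> ctrace \<rho> = 1"

definition kron :: "complex mat \<Rightarrow> complex mat \<Rightarrow> complex mat" where
  "kron A B = mat (dim_row A * dim_row B) (dim_col A * dim_col B)
     (\<lambda>(i,j). A $$ (i div dim_row B, j div dim_col B) * B $$ (i mod dim_row B, j mod dim_col B))"

definition ptrace1 :: "nat \<Rightarrow> nat \<Rightarrow> complex mat \<Rightarrow> complex mat" where
  "ptrace1 a m X = mat m m (\<lambda>(p,q). \<Sum>i<a. X $$ (i*m+p, i*m+q))"

definition ptrace2 :: "nat \<Rightarrow> nat \<Rightarrow> complex mat \<Rightarrow> complex mat" where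
  "ptrace2 a m X = mat a a (\<lambda>(i,j). \<Sum>p<m. X $$ (i*m+p, j*m+p))"

definition msqrt :: "nat \<Rightarrow> complex mat \<Rightarrow> complex mat" where
  "msqrt n A = (THE S. psd n S \<and> S * S = A)"

definition lin_map :: "nat \<Rightarrow> nat \<Rightarrow> (complex mat \<Rightarrow> complex mat) \<Rightarrow> bool" where
  "lin_map n m \<Phi> \<longleftrightarrow>
     (\<forall>A \<in> carrier_mat n n. \<Phi> A \<in> carrier_mat m m) \<and>
     (\<forall>A \<in> carrier_mat n n. \<forall>B \<in> carrier_mat n n. \<Phi> (A + B) = \<Phi> A + \<Phi> B) \<and>
     (\<forall>A \<in> carrier_mat n n. \<forall>c. \<Phi> (c \<cdot>\<^sub>m A) = c \<cdot>\<^sub>m \<Phi> A)"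

text \<open>(id_k (x) Phi) applied to a k*n x k*n matrix, blockwise.\<close>
definition ampl :: "nat \<Rightarrow> nat \<Rightarrow> nat \<Rightarrow> (complex mat \<Rightarrow> complex mat) \<Rightarrow> complex mat \<Rightarrow> complex mat" where
  "ampl k n m \<Phi> X = mat (k*m) (k*m) (\<lambda>(r,s).
      \<Phi> (mat n n (\<lambda>(p,q). X $$ ((r div m)*n + p, (s div m)*n + q))) $$ (r mod m, s mod m))"

definition comp_pos :: "nat \<Rightarrow> nat \<Rightarrow> (complex mat \<Rightarrow> complex mat) \<Rightarrow> bool" where
  "comp_pos n m \<Phi> \<longleftrightarrow> (\<forall>k. \<forall>X. psd (k*n) X \<longrightarrow> psd (k*m) (ampl k n m \<Phi> X))"

definition operation :: "nat \<Rightarrow> nat \<Rightarrow> (complex mat \<Rightarrow> complex mat) \<Rightarrow> bool" where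
  "operation n m \<Phi> \<longleftrightarrow> lin_map n m \<Phi> \<and> comp_pos n m \<Phi> \<and>
     (\<forall>\<rho>. psd n \<rho> \<longrightarrow> Re (ctrace (\<Phi> \<rho>)) \<le> Re (ctrace \<rho>))"

text \<open>Instrument in Ins(Omega, C^n, C^m); Omega is the finite type 'o.\<close>
definition instrument :: "nat \<Rightarrow> nat \<Rightarrow> ('o::finite \<Rightarrow> complex mat \<Rightarrow> complex mat) \<Rightarrow> bool" where
  "instrument n m I \<longleftrightarrow> (\<forall>x. operation n m (I x)) \<and>
     (\<forall>\<rho> \<in> carrier_mat n n. (\<Sum>x\<in>UNIV. ctrace (I x \<rho>)) = ctrace \<rho>)"

definition povm :: "nat \<Rightarrow> ('o::finite \<Rightarrow> complex mat) \<Rightarrow> bool" where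
  "povm n E \<longleftrightarrow> (\<forall>x. psd n (E x)) \<and> mat n n (\<lambda>(i,j). \<Sum>x\<in>UNIV. E x $$ (i,j)) = 1\<^sub>m n"

definition induced_povm :: "nat \<Rightarrow> ('o::finite \<Rightarrow> complex mat \<Rightarrow> complex mat) \<Rightarrow> 'o \<Rightarrow> complex mat" where
  "induced_povm n I x = (THE A. A \<in> carrier_mat n n \<and>
      (\<forall>\<rho> \<in> carrier_mat n n. ctrace (A * \<rho>) = ctrace (I x \<rho>)))"

definition indecomposable :: "nat \<Rightarrow> nat \<Rightarrow> ('o::finite \<Rightarrow> complex mat \<Rightarrow> complex mat) \<Rightarrow> bool" where
  "indecomposable n m I \<longleftrightarrow> (\<forall>x. (\<exists>\<rho> \<in> carrier_mat n n. I x \<rho> \<noteq> 0\<^sub>m m m) \<longrightarrow>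
      (\<exists>K \<in> carrier_mat m n. \<forall>\<rho> \<in> carrier_mat n n. I x \<rho> = K * \<rho> * adj K))"

definition dilation :: "nat \<Rightarrow> nat \<Rightarrow> ('o::finite \<Rightarrow> complex mat \<Rightarrow> complex mat)
    \<Rightarrow> nat \<Rightarrow> complex mat \<Rightarrow> ('o \<Rightarrow> complex mat) \<Rightarrow> bool" where
  "dilation n m I a W E \<longleftrightarrow> W \<in> carrier_mat (a*m) n \<and> adj W * W = 1\<^sub>m n \<and> povm a E \<and>
     (\<forall>x. \<forall>\<rho> \<in> carrier_mat n n.
        I x \<rho> = ptrace1 a m (W * \<rho> * adj W * kron (E x) (1\<^sub>m m)))"

definition complementary :: "nat \<Rightarrow> nat \<Rightarrow> complex mat \<Rightarrow> ('o \<Rightarrow> complex mat) \<Rightarrow> 'o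
    \<Rightarrow> complex mat \<Rightarrow> complex mat" where
  "complementary a m W E x \<rho> =
     ptrace2 a m (kron (msqrt a (E x)) (1\<^sub>m m) * W * \<rho> * adj W * kron (msqrt a (E x)) (1\<^sub>m m))"

definition orthonormal_basis :: "nat \<Rightarrow> ('o::finite \<Rightarrow> complex vec) \<Rightarrow> bool" where
  "orthonormal_basis a \<phi> \<longleftrightarrow> (\<forall>x. \<phi> x \<in> carrier_vec a) \<and>
     (\<forall>x y. (\<Sum>i<a. cnj (\<phi> x $ i) * \<phi> y $ i) = (if x = y then 1 else 0)) \<and>
     (\<forall>v \<in> carrier_vec a. \<exists>c. v = finsum_vec TYPE(complex) a (\<lambda>x. c x \<cdot>\<^sub>v \<phi> x) UNIV)"

definition ketbra :: "complex vec \<Rightarrow> complex mat" where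
  "ketbra v = mat (dim_vec v) (dim_vec v) (\<lambda>(i,j). v $ i * cnj (v $ j))"

end

theory Submission
  imports Defs
begin

text \<open>Every nonzero operation of an indecomposable instrument is I_x(\<rho>) = K_x \<rho> K_x^*,
  so its induced POVM is K_x^* K_x, and trace preservation gives \<Sum>_x K_x^* K_x = 1.
  Enumerating \<Omega> by an orthonormal basis \<phi>_x of C^|\<Omega>|, the operator
  W = \<Sum>_x \<phi>_x \<otimes> K_x is therefore an isometry. With the sharp POVM
  E(x) = |\<phi>_x\<rangle>\<langle>\<phi>_x|, which is its own square root, tracing out the ancilla
  recovers K_x \<rho> K_x^*, while tracing out the output space leaves
  tr[K_x \<rho> K_x^*] |\<phi>_x\<rangle>\<langle>\<phi>_x|.\<close>

lemma index_mult_mat_sum: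
  "A \<in> carrier_mat nr nk \<Longrightarrow> B \<in> carrier_mat nk nc \<Longrightarrow> i < nr \<Longrightarrow> j < nc \<Longrightarrow>
   (A * B) $$ (i,j) = (\<Sum>l<nk. A $$ (i,l) * B $$ (l,j))"
  by (auto simp: scalar_prod_def lessThan_atLeast0 intro!: sum.cong)

lemma adj_carrier_mat: "A \<in> carrier_mat r c \<Longrightarrow> adj A \<in> carrier_mat c r"
  by (auto simp: adj_def)

lemma index_adj: "A \<in> carrier_mat r c \<Longrightarrow> i < c \<Longrightarrow> j < r \<Longrightarrow> adj A $$ (i,j) = cnj (A $$ (j,i))"
  by (auto simp: adj_def)

lemma sum_lessThan_mult_split: "(\<Sum>r<a*m. h r) = (\<Sum>t<a. \<Sum>p<m. h (t*m+p::nat))"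
proof (induction a)
  case (Suc a)
  have "(\<Sum>r<Suc a*m. h r) = (\<Sum>r<a*m. h r) + (\<Sum>r\<in>{a*m..<a*m+m}. h r)"
    by (simp add: lessThan_atLeast0 add.commute sum.atLeastLessThan_concat)
  also have "(\<Sum>r\<in>{a*m..<a*m+m}. h r) = (\<Sum>p<m. h (a*m+p))"
    using sum.shift_bounds_nat_ivl[of h 0 "a*m" m] by (simp add: lessThan_atLeast0 add.commute)
  finally show ?case using Suc by simp
qed simp

lemma mult_add_less_mult: "t < a \<Longrightarrow> p < (m::nat) \<Longrightarrow> t*m+p < a*m"
proof -
  assume "t < a" "p < m"
  then have "t*m+p < (t+1)*m" "(t+1)*m \<le> a*m" by (simp, intro mult_le_mono1, simp)
  then show ?thesis by linarith
qed

lemma mult_if_zero_left: "(if P then a else 0) * (b::'a::mult_zero) = (if P then a * b else 0)"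
  by simp

lemma mult_if_zero_right: "(b::'a::mult_zero) * (if P then a else 0) = (if P then b * a else 0)"
  by simp

lemma cnj_if_zero: "cnj (if P then a else 0) = (if P then cnj a else 0)"
  by simp

lemmas if_zero_distribs = mult_if_zero_left mult_if_zero_right cnj_if_zero

lemma ctrace_mult_comm:
  assumes A: "A \<in> carrier_mat p q" and B: "B \<in> carrier_mat q p"
  shows "ctrace (A * B) = ctrace (B * A)"
proof -
  have "ctrace (A * B) = (\<Sum>i<p. \<Sum>l<q. A $$ (i,l) * B $$ (l,i))"
    unfolding ctrace_def using A B
    by (intro sum.cong) (auto simp: index_mult_mat_sum[OF A B] simp del: index_mult_mat(1))
  also have "\<dots> = (\<Sum>l<q. \<Sum>i<p. B $$ (l,i) * A $$ (i,l))"
    by (subst sum.swap) (simp add: mult.commute)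
  also have "\<dots> = ctrace (B * A)"
    unfolding ctrace_def using A B
    by (intro sum.cong) (auto simp: index_mult_mat_sum[OF B A] simp del: index_mult_mat(1))
  finally show ?thesis .
qed

lemma ctrace_sandwich:
  assumes K: "K \<in> carrier_mat m n" and \<rho>: "\<rho> \<in> carrier_mat n n"
  shows "ctrace (K * \<rho> * adj K) = ctrace (adj K * K * \<rho>)"
proof -
  have aK: "adj K \<in> carrier_mat n m" using adj_carrier_mat[OF K] .
  have "ctrace (K * \<rho> * adj K) = ctrace (K * (\<rho> * adj K))" using K \<rho> aK by simp
  also have "\<dots> = ctrace (\<rho> * adj K * K)" using K \<rho> aK by (intro ctrace_mult_comm) auto
  also have "\<dots> = ctrace (\<rho> * (adj K * K))" using K \<rho> aK by simp
  also have "\<dots> = ctrace (adj K * K * \<rho>)" using K \<rho> aK by (intro ctrace_mult_comm) auto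
  finally show ?thesis .
qed

definition mat_unit :: "nat \<Rightarrow> nat \<Rightarrow> nat \<Rightarrow> complex mat" where
  "mat_unit n i j = mat n n (\<lambda>(k,l). if k = i \<and> l = j then 1 else 0)"

lemma mat_unit_carrier [simp]: "mat_unit n i j \<in> carrier_mat n n"
  by (simp add: mat_unit_def)

lemma ctrace_mult_mat_unit:
  assumes A: "A \<in> carrier_mat n n" and i: "i < n" and j: "j < n"
  shows "ctrace (A * mat_unit n i j) = A $$ (j,i)"
proof -
  have "ctrace (A * mat_unit n i j) = (\<Sum>k<n. \<Sum>l<n. A $$ (k,l) * mat_unit n i j $$ (l,k))"
    unfolding ctrace_def using A
    by (intro sum.cong) (auto simp: index_mult_mat_sum[OF A mat_unit_carrier] simp del: index_mult_mat(1))
  also have "\<dots> = (\<Sum>k<n. if k = j then A $$ (k,i) else 0)"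
    using i by (intro sum.cong refl) (auto simp: mat_unit_def if_zero_distribs)
  also have "\<dots> = A $$ (j,i)" using j by simp
  finally show ?thesis .
qed

lemma ctrace_mat_unit: "i < n \<Longrightarrow> j < n \<Longrightarrow> ctrace (mat_unit n i j) = (if i = j then 1 else 0)"
  using ctrace_mult_mat_unit[of "1\<^sub>m n" n i j] left_mult_one_mat[OF mat_unit_carrier[of n i j]]
  by simp

lemma eq_mat_if_ctrace_mult_eq:
  assumes A: "A \<in> carrier_mat n n" and B: "B \<in> carrier_mat n n"
    and tr: "\<And>\<rho>. \<rho> \<in> carrier_mat n n \<Longrightarrow> ctrace (A * \<rho>) = ctrace (B * \<rho>)"
  shows "A = B"
proof (rule eq_matI)
  fix i j assume "i < dim_row B" "j < dim_col B"
  then have "i < n" "j < n" using B by auto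
  then show "A $$ (i,j) = B $$ (i,j)"
    using tr[OF mat_unit_carrier] ctrace_mult_mat_unit[OF A] ctrace_mult_mat_unit[OF B] by metis
qed (use A B in auto)

lemma index_mult_diag_right:
  assumes M: "M \<in> carrier_mat N N" and D: "D \<in> carrier_mat N N"
    and d: "\<And>k l. k < N \<Longrightarrow> l < N \<Longrightarrow> D $$ (k,l) = (if k = l then d l else 0)"
    and r: "r < N" and s: "s < N"
  shows "(M * D) $$ (r,s) = M $$ (r,s) * d s"
proof -
  have "(M * D) $$ (r,s) = (\<Sum>k<N. if k = s then M $$ (r,k) * d s else 0)"
    using index_mult_mat_sum[OF M D r s] by (simp add: d s if_zero_distribs)
  then show ?thesis using s by simp
qed

lemma index_mult_diag_left:
  assumes M: "M \<in> carrier_mat N N" and D: "D \<in> carrier_mat N N"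
    and d: "\<And>k l. k < N \<Longrightarrow> l < N \<Longrightarrow> D $$ (k,l) = (if k = l then d l else 0)"
    and r: "r < N" and s: "s < N"
  shows "(D * M) $$ (r,s) = d r * M $$ (r,s)"
proof -
  have "(D * M) $$ (r,s) = (\<Sum>k<N. if k = r then d r * M $$ (k,s) else 0)"
    using index_mult_mat_sum[OF D M r s] by (auto simp: d r if_zero_distribs intro!: sum.cong)
  then show ?thesis using r by simp
qed

lemma psd_quadratic_form:
  assumes "psd n S"
  shows "Im (\<Sum>k<n. \<Sum>l<n. cnj (f k) * S $$ (k,l) * f l) = 0 \<and>
         Re (\<Sum>k<n. \<Sum>l<n. cnj (f k) * S $$ (k,l) * f l) \<ge> 0"
proof -
  have "(\<Sum>k<n. \<Sum>l<n. cnj (vec n f $ k) * S $$ (k,l) * vec n f $ l) =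
        (\<Sum>k<n. \<Sum>l<n. cnj (f k) * S $$ (k,l) * f l)"
    by (intro sum.cong) auto
  moreover have "let q = (\<Sum>k<n. \<Sum>l<n. cnj (vec n f $ k) * S $$ (k,l) * vec n f $ l)
                 in Im q = 0 \<and> Re q \<ge> 0"
    using assms unfolding psd_def by (meson vec_carrier)
  ultimately show ?thesis unfolding Let_def by simp
qed

lemma psd_diag:
  assumes "psd n S" "i < n"
  shows "Im (S $$ (i,i)) = 0 \<and> Re (S $$ (i,i)) \<ge> 0"
  using psd_quadratic_form[OF assms(1), of "\<lambda>k. if k = i then 1 else 0"] assms(2)
  by (simp add: if_zero_distribs)

lemma psd_hermitian:
  assumes S: "psd n S" and i: "i < n" and j: "j < n"
  shows "S $$ (j,i) = cnj (S $$ (i,j))"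
proof (cases "i = j")
  case True
  then show ?thesis using psd_diag[OF S i] by (simp add: complex_eq_iff)
next
  case False
  \<comment> \<open>Polarization: the forms at e_i + e_j and at e_i + \<i> e_j are real.\<close>
  have form: "(\<Sum>k<n. \<Sum>l<n. cnj ((if k = i then 1 else 0) + (if k = j then c else 0)) * S $$ (k,l) *
                 ((if l = i then 1 else 0) + (if l = j then c else 0)))
            = S $$ (i,i) + c * S $$ (i,j) + cnj c * S $$ (j,i) + cnj c * c * S $$ (j,j)" for c
    using i j False by (simp add: ring_distribs sum.distrib if_zero_distribs)
  have "Im (S $$ (i,i) + c * S $$ (i,j) + cnj c * S $$ (j,i) + cnj c * c * S $$ (j,j)) = 0" for c
    using psd_quadratic_form[OF S, of "\<lambda>k. (if k = i then 1 else 0) + (if k = j then c else 0)"]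
    unfolding form by simp
  from this[of 1] this[of \<i>] show ?thesis
    using psd_diag[OF S i] psd_diag[OF S j] by (simp add: complex_eq_iff)
qed

lemma ketbra_unit_vec: "ketbra (unit_vec a t) = mat a a (\<lambda>(i,j). if i = t \<and> j = t then 1 else 0)"
  by (rule eq_matI) (auto simp: ketbra_def unit_vec_def)

lemma ketbra_carrier [simp]: "ketbra v \<in> carrier_mat (dim_vec v) (dim_vec v)"
  by (simp add: ketbra_def)

lemma psd_ketbra: "psd (dim_vec v) (ketbra v)"
  unfolding psd_def
proof (intro conjI ballI ketbra_carrier)
  fix w :: "complex vec"
  define N where "N = dim_vec v"
  define s where "s = (\<Sum>j<N. cnj (v $ j) * w $ j)"
  have "(\<Sum>i<N. \<Sum>j<N. cnj (w $ i) * ketbra v $$ (i,j) * w $ j)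
      = (\<Sum>i<N. cnj (w $ i) * v $ i) * (\<Sum>j<N. cnj (v $ j) * w $ j)"
    by (auto simp: ketbra_def N_def sum_product mult_ac intro!: sum.cong)
  also have "\<dots> = cnj s * s" by (simp add: s_def mult.commute)
  also have "\<dots> = of_real ((cmod s)^2)" by (metis complex_norm_square mult.commute)
  finally show "let q = (\<Sum>i<N. \<Sum>j<N. cnj (w $ i) * ketbra v $$ (i,j) * w $ j) in Im q = 0 \<and> 0 \<le> Re q"
    by simp
qed

lemma ketbra_unit_vec_idem: "ketbra (unit_vec a t) * ketbra (unit_vec a t) = ketbra (unit_vec a t)"
proof (rule eq_matI)
  let ?P = "ketbra (unit_vec a t)"
  have P: "?P \<in> carrier_mat a a" using ketbra_carrier[of "unit_vec a t"] by simp
  fix i j assume "i < dim_row ?P" "j < dim_col ?P"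
  then have ij: "i < a" "j < a" by (auto simp: ketbra_def)
  have "(?P * ?P) $$ (i,j) = (\<Sum>l<a. ?P $$ (i,l) * ?P $$ (l,j))"
    using index_mult_mat_sum[OF P P ij] .
  also have "\<dots> = (\<Sum>l<a. if l = t then (if i = t \<and> j = t then 1 else 0) else 0)"
    by (intro sum.cong refl) (auto simp: ketbra_unit_vec ij)
  finally show "(?P * ?P) $$ (i,j) = ?P $$ (i,j)" using ij by (simp add: ketbra_unit_vec)
qed (auto simp: ketbra_def)

lemma psd_row_eq_0_if_square_diag_eq_0:
  assumes S: "psd n S" and k: "k < n" and SSk: "(S * S) $$ (k,k) = 0" and l: "l < n"
  shows "S $$ (k,l) = 0"
proof -
  have Sc: "S \<in> carrier_mat n n" using S by (simp add: psd_def)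
  have "(S * S) $$ (k,k) = (\<Sum>j<n. S $$ (k,j) * S $$ (j,k))"
    using index_mult_mat_sum[OF Sc Sc k k] .
  also have "\<dots> = (\<Sum>j<n. of_real ((cmod (S $$ (k,j)))^2))"
    using psd_hermitian[OF S k] by (intro sum.cong refl) (metis complex_norm_square lessThan_iff)
  also have "\<dots> = of_real (\<Sum>j<n. (cmod (S $$ (k,j)))^2)"
    by (simp only: of_real_sum)
  finally have "(\<Sum>j<n. (cmod (S $$ (k,j)))^2) = 0" using SSk by (metis of_real_eq_0_iff)
  then have "\<forall>j\<in>{..<n}. (cmod (S $$ (k,j)))^2 = 0"
    by (subst (asm) sum_nonneg_eq_0_iff) auto
  then show ?thesis using l by auto
qed

lemma psd_sqrt_ketbra_unit_vec:
  assumes S: "psd a S" and SS: "S * S = ketbra (unit_vec a t)" and t: "t < a"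
  shows "S = ketbra (unit_vec a t)"
proof -
  have Sc: "S \<in> carrier_mat a a" using S by (simp add: psd_def)
  have row: "S $$ (k,l) = 0" if "k < a" "k \<noteq> t" "l < a" for k l
    using psd_row_eq_0_if_square_diag_eq_0[OF S] SS that by (simp add: ketbra_unit_vec)
  have off: "S $$ (k,l) = 0" if "k < a" "l < a" "\<not> (k = t \<and> l = t)" for k l
    using row[of k l] row[of l k] psd_hermitian[OF S, of k l] that by fastforce
  have "(S * S) $$ (t,t) = (\<Sum>j<a. S $$ (t,j) * S $$ (j,t))"
    using index_mult_mat_sum[OF Sc Sc t t] .
  also have "\<dots> = (\<Sum>j<a. if j = t then S $$ (t,t) * S $$ (t,t) else 0)"
    by (intro sum.cong refl) (auto simp: off t)
  finally have "S $$ (t,t) * S $$ (t,t) = 1" using SS t by (simp add: ketbra_unit_vec)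
  moreover have "S $$ (t,t) = of_real (Re (S $$ (t,t)))" "Re (S $$ (t,t)) \<ge> 0"
    using psd_diag[OF S t] by (auto simp: complex_eq_iff)
  ultimately have "S $$ (t,t) = 1"
    by (metis abs_of_nonneg abs_square_eq_1 of_real_1 of_real_eq_iff of_real_mult power2_eq_square)
  then show ?thesis
    by (intro eq_matI) (use Sc off in \<open>auto simp: ketbra_unit_vec\<close>)
qed

lemma msqrt_ketbra_unit_vec: "t < a \<Longrightarrow> msqrt a (ketbra (unit_vec a t)) = ketbra (unit_vec a t)"
  unfolding msqrt_def
  by (rule the_equality)
    (auto simp: ketbra_unit_vec_idem psd_sqrt_ketbra_unit_vec psd_ketbra[of "unit_vec a t", simplified])

lemma kron_ketbra_unit_vec_one_carrier [simp]:
  "kron (ketbra (unit_vec a t)) (1\<^sub>m m) \<in> carrier_mat (a*m) (a*m)"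
  by (simp add: kron_def ketbra_def)

lemma index_kron_ketbra_unit_vec_one:
  assumes k: "k < a*m" and l: "l < a*m"
  shows "kron (ketbra (unit_vec a t)) (1\<^sub>m m) $$ (k,l)
       = (if k = l then (if l div m = t then 1 else 0) else 0)"
proof -
  have "m > 0" using k by (cases m) auto
  moreover have "k div m < a" "l div m < a" using k l by (auto simp: less_mult_imp_div_less)
  moreover have "k = l \<longleftrightarrow> k div m = l div m \<and> k mod m = l mod m"
    by (metis div_mult_mod_eq)
  ultimately show ?thesis
    unfolding kron_def using k l by (auto simp: ketbra_unit_vec)
qed

definition stack_mat :: "nat \<Rightarrow> nat \<Rightarrow> nat \<Rightarrow> (nat \<Rightarrow> complex mat) \<Rightarrow> complex mat" where
  "stack_mat a m n K = mat (a*m) n (\<lambda>(r,j). K (r div m) $$ (r mod m, j))"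

lemma stack_mat_carrier [simp]: "stack_mat a m n K \<in> carrier_mat (a*m) n"
  by (simp add: stack_mat_def)

lemma index_adj_stack_mat_mult_stack_mat:
  assumes K: "\<And>t. K t \<in> carrier_mat m n" and i: "i < n" and j: "j < n"
  shows "(adj (stack_mat a m n K) * stack_mat a m n K) $$ (i,j) = (\<Sum>t<a. (adj (K t) * K t) $$ (i,j))"
proof -
  let ?W = "stack_mat a m n K"
  have "(adj ?W * ?W) $$ (i,j) = (\<Sum>r<a*m. adj ?W $$ (i,r) * ?W $$ (r,j))"
    using index_mult_mat_sum[OF adj_carrier_mat[OF stack_mat_carrier] stack_mat_carrier i j] .
  also have "\<dots> = (\<Sum>t<a. \<Sum>p<m. adj ?W $$ (i,t*m+p) * ?W $$ (t*m+p,j))"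
    by (rule sum_lessThan_mult_split)
  also have "\<dots> = (\<Sum>t<a. \<Sum>p<m. adj (K t) $$ (i,p) * K t $$ (p,j))"
  proof (intro sum.cong refl)
    fix t p assume "t \<in> {..<a}" "p \<in> {..<m}"
    then have tp: "t < a" "p < m" by auto
    then have "(t*m+p) div m = t" "(t*m+p) mod m = p" by auto
    then show "adj ?W $$ (i,t*m+p) * ?W $$ (t*m+p,j) = adj (K t) $$ (i,p) * K t $$ (p,j)"
      using index_adj[OF stack_mat_carrier i mult_add_less_mult[OF tp]] index_adj[OF K i tp(2)]
        mult_add_less_mult[OF tp] i j by (simp add: stack_mat_def)
  qed
  also have "\<dots> = (\<Sum>t<a. (adj (K t) * K t) $$ (i,j))"
    using index_mult_mat_sum[OF adj_carrier_mat[OF K] K i j] by simp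
  finally show ?thesis .
qed

lemma index_stack_mat_sandwich:
  assumes K: "\<And>t. K t \<in> carrier_mat m n" and \<rho>: "\<rho> \<in> carrier_mat n n"
    and i: "i < a*m" and j: "j < a*m"
  shows "(stack_mat a m n K * \<rho> * adj (stack_mat a m n K)) $$ (i,j)
       = (K (i div m) * \<rho> * adj (K (j div m))) $$ (i mod m, j mod m)"
proof -
  let ?W = "stack_mat a m n K"
  have im: "i mod m < m" "j mod m < m" using i j by (cases m; auto)+
  have Wrow: "?W $$ (r,l) = K (r div m) $$ (r mod m, l)" if "r < a*m" "l < n" for r l
    using that by (simp add: stack_mat_def)
  have row: "(?W * \<rho>) $$ (i,k) = (K (i div m) * \<rho>) $$ (i mod m, k)" if k: "k < n" for k
    using index_mult_mat_sum[OF stack_mat_carrier \<rho> i k] index_mult_mat_sum[OF K \<rho> im(1) k]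
    by (simp add: Wrow i)
  have "(?W * \<rho> * adj ?W) $$ (i,j) = (\<Sum>k<n. (?W * \<rho>) $$ (i,k) * adj ?W $$ (k,j))"
    using index_mult_mat_sum[OF mult_carrier_mat[OF stack_mat_carrier \<rho>]
        adj_carrier_mat[OF stack_mat_carrier] i j] .
  also have "\<dots> = (\<Sum>k<n. (K (i div m) * \<rho>) $$ (i mod m, k) * adj (K (j div m)) $$ (k, j mod m))"
    by (intro sum.cong refl)
      (simp add: row index_adj[OF stack_mat_carrier _ j] index_adj[OF K _ im(2)] Wrow j)
  also have "\<dots> = (K (i div m) * \<rho> * adj (K (j div m))) $$ (i mod m, j mod m)"
    using index_mult_mat_sum[OF mult_carrier_mat[OF K \<rho>] adj_carrier_mat[OF K] im] by simp
  finally show ?thesis .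
qed

lemma ptrace1_stack_mat_sandwich_proj:
  assumes K: "\<And>t. K t \<in> carrier_mat m n" and \<rho>: "\<rho> \<in> carrier_mat n n" and t: "t < a"
  shows "ptrace1 a m (stack_mat a m n K * \<rho> * adj (stack_mat a m n K) *
           kron (ketbra (unit_vec a t)) (1\<^sub>m m))
       = K t * \<rho> * adj (K t)"
proof (rule eq_matI)
  let ?W = "stack_mat a m n K" and ?D = "kron (ketbra (unit_vec a t)) (1\<^sub>m m)"
  have Y: "?W * \<rho> * adj ?W \<in> carrier_mat (a*m) (a*m)"
    using \<rho> adj_carrier_mat[OF stack_mat_carrier] by (metis mult_carrier_mat stack_mat_carrier)
  fix p q assume "p < dim_row (K t * \<rho> * adj (K t))" "q < dim_col (K t * \<rho> * adj (K t))"
  then have pq: "p < m" "q < m" using K[of t] adj_carrier_mat[OF K[of t]] by auto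
  have "ptrace1 a m (?W * \<rho> * adj ?W * ?D) $$ (p,q)
      = (\<Sum>s<a. (?W * \<rho> * adj ?W * ?D) $$ (s*m+p, s*m+q))"
    using pq by (simp add: ptrace1_def)
  also have "\<dots> = (\<Sum>s<a. if s = t then (K t * \<rho> * adj (K t)) $$ (p,q) else 0)"
  proof (intro sum.cong refl)
    fix s assume "s \<in> {..<a}"
    then have sp: "s*m+p < a*m" and sq: "s*m+q < a*m" using pq mult_add_less_mult by auto
    have "(?W * \<rho> * adj ?W * ?D) $$ (s*m+p, s*m+q)
        = (?W * \<rho> * adj ?W) $$ (s*m+p, s*m+q) * (if s = t then 1 else 0)"
      using index_mult_diag_right[OF Y kron_ketbra_unit_vec_one_carrier _ sp sq]
        index_kron_ketbra_unit_vec_one pq by auto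
    then show "(?W * \<rho> * adj ?W * ?D) $$ (s*m+p, s*m+q)
        = (if s = t then (K t * \<rho> * adj (K t)) $$ (p,q) else 0)"
      using index_stack_mat_sandwich[OF K \<rho> sp sq] pq by simp
  qed
  also have "\<dots> = (K t * \<rho> * adj (K t)) $$ (p,q)" using t by simp
  finally show "ptrace1 a m (?W * \<rho> * adj ?W * ?D) $$ (p,q) = (K t * \<rho> * adj (K t)) $$ (p,q)" .
qed (use K[of t] adj_carrier_mat[OF K[of t]] in \<open>auto simp: ptrace1_def\<close>)

lemma ptrace2_proj_stack_mat_sandwich_proj:
  assumes K: "\<And>t. K t \<in> carrier_mat m n" and \<rho>: "\<rho> \<in> carrier_mat n n" and t: "t < a"
  shows "ptrace2 a m (kron (ketbra (unit_vec a t)) (1\<^sub>m m) * stack_mat a m n K * \<rho> *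
           adj (stack_mat a m n K) * kron (ketbra (unit_vec a t)) (1\<^sub>m m))
       = ctrace (K t * \<rho> * adj (K t)) \<cdot>\<^sub>m ketbra (unit_vec a t)"
proof (rule eq_matI)
  let ?W = "stack_mat a m n K" and ?D = "kron (ketbra (unit_vec a t)) (1\<^sub>m m)"
  have W: "?W \<in> carrier_mat (a*m) n" and aW: "adj ?W \<in> carrier_mat n (a*m)"
    using adj_carrier_mat[OF stack_mat_carrier] by auto
  have Y: "?W * \<rho> * adj ?W \<in> carrier_mat (a*m) (a*m)" using W aW \<rho> by (metis mult_carrier_mat)
  have "?D * ?W * \<rho> = ?D * (?W * \<rho>)"
    using assoc_mult_mat[OF kron_ketbra_unit_vec_one_carrier W \<rho>] .
  moreover have "?D * (?W * \<rho>) * adj ?W = ?D * (?W * \<rho> * adj ?W)"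
    using assoc_mult_mat[OF kron_ketbra_unit_vec_one_carrier mult_carrier_mat[OF W \<rho>] aW] .
  ultimately have "?D * ?W * \<rho> * adj ?W * ?D = ?D * (?W * \<rho> * adj ?W) * ?D" by simp
  moreover have "(?D * (?W * \<rho> * adj ?W) * ?D) $$ (k,l)
      = (if k div m = t then 1 else 0) * (?W * \<rho> * adj ?W) $$ (k,l) * (if l div m = t then 1 else 0)"
    if "k < a*m" "l < a*m" for k l
    using index_mult_diag_right[OF mult_carrier_mat[OF kron_ketbra_unit_vec_one_carrier Y]
        kron_ketbra_unit_vec_one_carrier _ that]
      index_mult_diag_left[OF Y kron_ketbra_unit_vec_one_carrier _ that]
      index_kron_ketbra_unit_vec_one by auto
  ultimately have DYD: "(?D * ?W * \<rho> * adj ?W * ?D) $$ (i*m+p, j*m+p)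
      = (if i = t \<and> j = t then (K t * \<rho> * adj (K t)) $$ (p,p) else 0)"
    if "i < a" "j < a" "p < m" for i j p
    using index_stack_mat_sandwich[OF K \<rho>] mult_add_less_mult that by auto
  fix i j assume "i < dim_row (ctrace (K t * \<rho> * adj (K t)) \<cdot>\<^sub>m ketbra (unit_vec a t))"
    "j < dim_col (ctrace (K t * \<rho> * adj (K t)) \<cdot>\<^sub>m ketbra (unit_vec a t))"
  then have ij: "i < a" "j < a" by (auto simp: ketbra_def)
  have "ptrace2 a m (?D * ?W * \<rho> * adj ?W * ?D) $$ (i,j)
      = (\<Sum>p<m. if i = t \<and> j = t then (K t * \<rho> * adj (K t)) $$ (p,p) else 0)"
    using ij DYD by (simp add: ptrace2_def)
  also have "\<dots> = (ctrace (K t * \<rho> * adj (K t)) \<cdot>\<^sub>m ketbra (unit_vec a t)) $$ (i,j)"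
    using ij K[of t] by (auto simp: ctrace_def ketbra_unit_vec)
  finally show "ptrace2 a m (?D * ?W * \<rho> * adj ?W * ?D) $$ (i,j)
      = (ctrace (K t * \<rho> * adj (K t)) \<cdot>\<^sub>m ketbra (unit_vec a t)) $$ (i,j)" .
qed (auto simp: ptrace2_def ketbra_def)

lemma indecomposable_kraus:
  assumes "indecomposable n m I"
  obtains K where "\<And>x. K x \<in> carrier_mat m n"
    and "\<And>x \<rho>. \<rho> \<in> carrier_mat n n \<Longrightarrow> I x \<rho> = K x * \<rho> * adj (K x)"
proof -
  have "\<exists>K \<in> carrier_mat m n. \<forall>\<rho> \<in> carrier_mat n n. I x \<rho> = K * \<rho> * adj K" for x
  proof (cases "\<exists>\<rho> \<in> carrier_mat n n. I x \<rho> \<noteq> 0\<^sub>m m m")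
    case True
    then show ?thesis using assms unfolding indecomposable_def by blast
  next
    case False
    then show ?thesis
      using adj_carrier_mat[of "0\<^sub>m m n" m n] by (intro bexI[of _ "0\<^sub>m m n"]) auto
  qed
  then show ?thesis using that by metis
qed

lemma induced_povm_kraus:
  assumes K: "K \<in> carrier_mat m n" and IK: "\<And>\<rho>. \<rho> \<in> carrier_mat n n \<Longrightarrow> I x \<rho> = K * \<rho> * adj K"
  shows "induced_povm n I x = adj K * K"
  unfolding induced_povm_def
proof (rule the_equality)
  have KK: "adj K * K \<in> carrier_mat n n" using adj_carrier_mat[OF K] K by (metis mult_carrier_mat)
  then show "adj K * K \<in> carrier_mat n n \<and>
      (\<forall>\<rho> \<in> carrier_mat n n. ctrace (adj K * K * \<rho>) = ctrace (I x \<rho>))"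
    using IK ctrace_sandwich[OF K] by simp
  fix A assume "A \<in> carrier_mat n n \<and> (\<forall>\<rho> \<in> carrier_mat n n. ctrace (A * \<rho>) = ctrace (I x \<rho>))"
  then show "A = adj K * K"
    using KK IK ctrace_sandwich[OF K] by (intro eq_mat_if_ctrace_mult_eq[of _ n]) auto
qed

lemma instrument_kraus_completeness:
  assumes I: "instrument n m I" and K: "\<And>x. K x \<in> carrier_mat m n"
    and IK: "\<And>x \<rho>. \<rho> \<in> carrier_mat n n \<Longrightarrow> I x \<rho> = K x * \<rho> * adj (K x)"
    and i: "i < n" and j: "j < n"
  shows "(\<Sum>x\<in>UNIV. (adj (K x) * K x) $$ (i,j)) = 1\<^sub>m n $$ (i,j)"
proof -
  have KK: "adj (K x) * K x \<in> carrier_mat n n" for x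
    using adj_carrier_mat[OF K] K by (metis mult_carrier_mat)
  have "(\<Sum>x\<in>UNIV. ctrace (I x (mat_unit n j i))) = ctrace (mat_unit n j i)"
    using I unfolding instrument_def by simp
  moreover have "ctrace (I x (mat_unit n j i)) = (adj (K x) * K x) $$ (i,j)" for x
    using IK ctrace_sandwich[OF K] ctrace_mult_mat_unit[OF KK j i] by simp
  ultimately show ?thesis using ctrace_mat_unit[OF j i] i j by auto
qed

lemma sum_bij_betw_delta:
  assumes f: "bij_betw f (UNIV :: 'o::finite set) {..<a}" and t: "t < a"
  shows "(\<Sum>x\<in>UNIV. if f x = t then c else 0) = c"
proof -
  have "f x = t \<longleftrightarrow> x = inv_into UNIV f t" for x
    using f t by (auto simp: bij_betw_def f_inv_into_f)
  then show ?thesis by simp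
qed

lemma orthonormal_basis_unit_vec:
  assumes f: "bij_betw f (UNIV :: 'o::finite set) {..<a}"
  shows "orthonormal_basis a (\<lambda>x. unit_vec a (f x))"
  unfolding orthonormal_basis_def
proof (intro conjI allI ballI)
  have fa: "f x < a" for x using f by (auto simp: bij_betw_def)
  fix x y
  have "(\<Sum>i<a. cnj (unit_vec a (f x) $ i) * unit_vec a (f y) $ i)
      = (\<Sum>i<a. if i = f x then (if f x = f y then 1 else 0) else 0)"
    by (intro sum.cong refl) (auto simp: unit_vec_def)
  also have "\<dots> = (if x = y then 1 else 0)"
    using fa[of x] f by (auto simp: bij_betw_def inj_eq)
  finally show "(\<Sum>i<a. cnj (unit_vec a (f x) $ i) * unit_vec a (f y) $ i) = (if x = y then 1 else 0)" .
next
  fix v :: "complex vec" assume v: "v \<in> carrier_vec a"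
  have cl: "(\<lambda>x. v $ f x \<cdot>\<^sub>v unit_vec a (f x)) \<in> UNIV \<rightarrow> carrier_vec a" by simp
  have "finsum_vec TYPE(complex) a (\<lambda>x. v $ f x \<cdot>\<^sub>v unit_vec a (f x)) UNIV $ i = v $ i" if i: "i < a" for i
  proof -
    have "finsum_vec TYPE(complex) a (\<lambda>x. v $ f x \<cdot>\<^sub>v unit_vec a (f x)) UNIV $ i
        = (\<Sum>x\<in>UNIV. if f x = i then v $ i else 0)"
      using index_finsum_vec[OF _ i cl] by (auto simp: i unit_vec_def intro!: sum.cong)
    then show ?thesis using sum_bij_betw_delta[OF f i] by simp
  qed
  then show "\<exists>c. v = finsum_vec TYPE(complex) a (\<lambda>x. c x \<cdot>\<^sub>v unit_vec a (f x)) UNIV"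
    using v finsum_vec_closed[OF cl] by (intro exI[of _ "\<lambda>x. v $ f x"] eq_vecI) auto
qed simp

lemma povm_ketbra_unit_vec:
  assumes f: "bij_betw f (UNIV :: 'o::finite set) {..<a}"
  shows "povm a (\<lambda>x. ketbra (unit_vec a (f x)))"
  unfolding povm_def
proof (intro conjI allI)
  show "psd a (ketbra (unit_vec a (f x)))" for x using psd_ketbra[of "unit_vec a (f x)"] by simp
  have "(\<Sum>x\<in>UNIV. ketbra (unit_vec a (f x)) $$ (i,j)) = 1\<^sub>m a $$ (i,j)" if "i < a" "j < a" for i j
  proof -
    have "(\<Sum>x\<in>UNIV. ketbra (unit_vec a (f x)) $$ (i,j))
        = (\<Sum>x\<in>UNIV. if f x = i then (if i = j then 1 else 0) else 0)"
      by (intro sum.cong refl) (auto simp: ketbra_unit_vec that)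
    also have "\<dots> = (if i = j then 1 else 0)" by (rule sum_bij_betw_delta[OF f that(1)])
    finally show ?thesis using that by simp
  qed
  then show "mat a a (\<lambda>(i,j). \<Sum>x\<in>UNIV. ketbra (unit_vec a (f x)) $$ (i,j)) = 1\<^sub>m a"
    by (intro eq_matI) auto
qed

lemma stack_mat_isometry:
  assumes f: "bij_betw f UNIV {..<a}" and K: "\<And>x. K x \<in> carrier_mat m n"
    and complete: "\<And>i j. i < n \<Longrightarrow> j < n \<Longrightarrow>
      (\<Sum>x\<in>UNIV. (adj (K x) * K x) $$ (i,j)) = 1\<^sub>m n $$ (i,j)"
  shows "adj (stack_mat a m n (K \<circ> inv_into UNIV f)) * stack_mat a m n (K \<circ> inv_into UNIV f) = 1\<^sub>m n"
proof (rule eq_matI)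
  let ?K = "K \<circ> inv_into UNIV f" and ?W = "stack_mat a m n (K \<circ> inv_into UNIV f)"
  fix i j assume "i < dim_row (1\<^sub>m n)" "j < dim_col (1\<^sub>m n)"
  then have ij: "i < n" "j < n" by auto
  have "(\<Sum>t<a. (adj (?K t) * ?K t) $$ (i,j)) = (\<Sum>x\<in>UNIV. (adj (K x) * K x) $$ (i,j))"
    using sum.reindex_bij_betw[OF f, of "\<lambda>t. (adj (?K t) * ?K t) $$ (i,j)"] f
    by (simp add: bij_betw_inv_into_left)
  then show "(adj ?W * ?W) $$ (i,j) = 1\<^sub>m n $$ (i,j)"
    using index_adj_stack_mat_mult_stack_mat[of ?K, OF _ ij] K complete[OF ij] by simp
qed (auto simp: adj_def stack_mat_def)

theorem lemma1:
  fixes n m :: nat and I :: "'o::finite \<Rightarrow> complex mat \<Rightarrow> complex mat"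
  assumes "instrument n m I" and "indecomposable n m I"
  shows "\<exists>a W E \<phi>. dilation n m I a W E \<and> orthonormal_basis a \<phi> \<and>
           (\<forall>x. \<forall>\<rho>. density n \<rho> \<longrightarrow>
              complementary a m W E x \<rho> = ctrace (induced_povm n I x * \<rho>) \<cdot>\<^sub>m ketbra (\<phi> x))"
proof -
  obtain K where K: "\<And>x. K x \<in> carrier_mat m n"
    and IK: "\<And>x \<rho>. \<rho> \<in> carrier_mat n n \<Longrightarrow> I x \<rho> = K x * \<rho> * adj (K x)"
    using indecomposable_kraus[OF assms(2)] by blast
  obtain a and f :: "'o \<Rightarrow> nat" where f: "bij_betw f UNIV {..<a}"
    using ex_bij_betw_finite_nat[of "UNIV :: 'o set"] by (auto simp: lessThan_atLeast0)
  have fa: "f x < a" for x using f by (auto simp: bij_betw_def)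
  have Kf: "(K \<circ> inv_into UNIV f) (f x) = K x" for x using f by (simp add: bij_betw_inv_into_left)
  define W where "W = stack_mat a m n (K \<circ> inv_into UNIV f)"
  define \<phi> :: "'o \<Rightarrow> complex vec" where "\<phi> x = unit_vec a (f x)" for x
  define E where "E x = ketbra (\<phi> x)" for x
  have "dilation n m I a W E"
    unfolding dilation_def W_def E_def \<phi>_def
    using stack_mat_isometry[OF f K instrument_kraus_completeness[OF assms(1) K IK]]
      povm_ketbra_unit_vec[OF f] ptrace1_stack_mat_sandwich_proj[OF _ _ fa] K IK Kf by auto
  moreover have "complementary a m W E x \<rho> = ctrace (induced_povm n I x * \<rho>) \<cdot>\<^sub>m ketbra (\<phi> x)"
    if "density n \<rho>" for x \<rho>
  proof -
    have \<rho>: "\<rho> \<in> carrier_mat n n" using that by (simp add: density_def psd_def)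
    show ?thesis
      unfolding complementary_def W_def E_def \<phi>_def msqrt_ketbra_unit_vec[OF fa]
      using ptrace2_proj_stack_mat_sandwich_proj[of "K \<circ> inv_into UNIV f", OF _ \<rho> fa]
        induced_povm_kraus[where I = I and x = x, OF K IK] ctrace_sandwich[OF K[of x] \<rho>] K Kf by simp
  qed
  ultimately show ?thesis using orthonormal_basis_unit_vec[OF f] unfolding \<phi>_def by blast
qed

end
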